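(* Let $Q\in\mathbb{R}^{n\times n}$ be symmetric positive definite, $\|x\|=\sqrt{x^TQx}$, $\|u\|_*=\sqrt{u^TQ^{-1}u}$. Let $f\colon\mathbb{R}^n\to\mathbb{R}$ be convex and differentiable with $\|\nabla f(x)-\nabla f(y)\|_*\le L\|x-y\|$ for all $x,y$, with a minimizer $x_\star$, $f_\star=f(x_\star)$. Let $w$ be differentiable and $1$-strongly convex with respect to $\|\cdot\|$, $V_x(y)=w(y)-\langle\nabla w(x),y-x\rangle-w(x)$. Let $\{\alpha_k\}_{k\ge1}$ be positive with $\alpha_1=\frac2L$, and $\tau_k=\frac2{\alpha_{k+1}L}$ with $0<\tau_k\le1$ for $k=0,1,\dots$. Given $x_0$, let $z_0=x_0$, $x_{-1}=x_0$, and for $k\ge0$ \[ y_{k+1}=x_k-L^{-1}Q^{-1}\nabla f(x_k),\quad z_{k+1}=\operatorname*{argmin}_{y}\{V_{z_k}(y)+\langle\alpha_{k+1}\nabla f(x_k),y-x_k\rangle\},\quad x_{k+1}=(1-\tau_{k+1})y_{k+1}+\tau_{k+1}z_{k+1}. \] Let $h(x)=f(x)-f_\star-\frac1{2L}\|\nabla f(x)\|_*^2$. Then for $k=0,1,\dots$, \[ \frac{\alpha_{k+1}^2L}{2}h(x_k)+V_{z_{k+1}}(x_\star)\le\frac{\alpha_{k+1}^2L-2\alpha_{k+1}}{2}h(x_{k-1})+V_{z_k}(x_\star). \]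
   Context: $\langle\cdot,\cdot\rangle$ is the Euclidean inner product. "$1$-strongly convex with respect to $\|\cdot\|$" means $w(y)\ge w(x)+\langle\nabla w(x),y-x\rangle+\frac12\|y-x\|^2$ for all $x,y$. *)

theory Defs
  imports "HOL-Analysis.Analysis"
begin

definition qnorm :: "real^'n^'n \<Rightarrow> real^'n \<Rightarrow> real" where
  "qnorm Q x = sqrt (x \<bullet> (Q *v x))"

definition qdnorm :: "real^'n^'n \<Rightarrow> real^'n \<Rightarrow> real" where
  "qdnorm Q u = sqrt (u \<bullet> (matrix_inv Q *v u))"

definition spd :: "real^'n^'n \<Rightarrow> bool" where
  "spd Q \<longleftrightarrow> transpose Q = Q \<and> (\<forall>x. x \<noteq> 0 \<longrightarrow> x \<bullet> (Q *v x) > 0)"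

definition bregman :: "(real^'n \<Rightarrow> real) \<Rightarrow> (real^'n \<Rightarrow> real^'n) \<Rightarrow> real^'n \<Rightarrow> real^'n \<Rightarrow> real" where
  "bregman w gw x y = w y - gw x \<bullet> (y - x) - w x"

end

(* For convex f with L-Lipschitz
   gradient, smoothness and convexity combine into the cocoercive lower bound
     f u + <grad f u, v - u> + ||grad f v - grad f u||_*^2 / (2L) <= f v.
   At (x_k, x_star) it bounds h(x_k) by <g, x_k - x_star> - ||g||_*^2 / L, where g = grad f(x_k),
   and x_k - x_star splits as (x_k - z_k) + (z_k - x_star).  The mirror part is paid for by the
   Bregman decrease V_{z_k}(x_star) - V_{z_{k+1}}(x_star) up to alpha^2 ||g||_*^2 / 2 (optimality
   of z_{k+1}, the three-point identity and strong convexity of w).  The choice tau = 2/(alpha L)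
   is exactly what turns the coupling part alpha <g, x_k - z_k> into
   (alpha^2 L - 2 alpha)/2 <g, y_k - x_k>, and the cocoercive bound at (x_k, x_{k-1}) controls
   this by h(x_{k-1}) - h(x_k) - ||g||_*^2 / L.  The ||g||_*^2 terms then cancel. *)

theory Submission
  imports Defs
begin

lemma matrix_mul_matrix_inv:
  fixes A :: "'a::semiring_1^'n^'m"
  assumes "invertible A"
  shows "A ** matrix_inv A = mat 1"
  using someI_ex[OF assms[unfolded invertible_def]] by (simp add: matrix_inv_def)

lemma spd_invertible:
  assumes "spd Q" shows "invertible Q"
proof -
  have "Q *v x = 0 \<Longrightarrow> x = 0" for x
    using assms unfolding spd_def by (metis inner_zero_right less_irrefl)
  then show ?thesis
    by (metis invertible_left_inverse matrix_left_invertible_ker)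
qed

lemma spd_inner_commute:
  assumes "spd Q" shows "a \<bullet> (Q *v b) = b \<bullet> (Q *v a)"
  by (metis assms dot_lmul_matrix inner_commute spd_def transpose_matrix_vector)

lemma spd_matrix_inv:
  assumes Q: "spd Q" shows "spd (matrix_inv Q)"
  unfolding spd_def
proof safe
  let ?P = "matrix_inv Q"
  note inv = matrix_mul_matrix_inv[OF spd_invertible[OF Q]]
  have "transpose ?P ** Q = mat 1"
    using Q inv unfolding spd_def by (metis matrix_transpose_mul transpose_mat)
  then show "transpose ?P = ?P"
    by (metis inv matrix_mul_assoc matrix_mul_lid matrix_mul_rid)
  fix x :: "real^'a" assume "x \<noteq> 0"
  have Qx: "Q *v (?P *v x) = x"
    by (simp add: inv matrix_vector_mul_assoc)
  with \<open>x \<noteq> 0\<close> have "?P *v x \<noteq> 0" by auto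
  then have "0 < (?P *v x) \<bullet> (Q *v (?P *v x))" using Q unfolding spd_def by blast
  then show "0 < x \<bullet> (?P *v x)" by (simp add: Qx inner_commute)
qed

lemma spd_mult_matrix_inv:
  assumes "spd Q" shows "Q *v (matrix_inv Q *v a) = a"
  by (simp add: assms matrix_mul_matrix_inv matrix_vector_mul_assoc spd_invertible)

lemma qdnorm_eq_qnorm_matrix_inv: "qdnorm Q = qnorm (matrix_inv Q)"
  unfolding qdnorm_def qnorm_def ..

lemma spd_inner_nonneg:
  assumes "spd Q" shows "0 \<le> a \<bullet> (Q *v a)"
  using assms unfolding spd_def by (cases "a = 0") (auto intro: less_imp_le)

lemma qnorm_nonneg:
  assumes "spd Q" shows "0 \<le> qnorm Q a"
  unfolding qnorm_def using spd_inner_nonneg[OF assms] by simp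

lemma qdnorm_nonneg:
  assumes "spd Q" shows "0 \<le> qdnorm Q a"
  unfolding qdnorm_eq_qnorm_matrix_inv using qnorm_nonneg[OF spd_matrix_inv[OF assms]] .

lemma power2_qnorm:
  assumes "spd Q" shows "(qnorm Q a)\<^sup>2 = a \<bullet> (Q *v a)"
  unfolding qnorm_def using spd_inner_nonneg[OF assms] by simp

lemma qnorm_scaleR: "qnorm Q (t *\<^sub>R a) = \<bar>t\<bar> * qnorm Q a"
proof -
  have "(t *\<^sub>R a) \<bullet> (Q *v (t *\<^sub>R a)) = t\<^sup>2 * (a \<bullet> (Q *v a))"
    by (simp add: matrix_vector_mult_scaleR power2_eq_square)
  then show ?thesis unfolding qnorm_def by (simp add: real_sqrt_mult)
qed

lemma qnorm_uminus: "qnorm Q (- a) = qnorm Q a"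
  using matrix_vector_mult_diff_distrib[of Q 0 a] unfolding qnorm_def by simp

lemma qdnorm_scaleR: "qdnorm Q (t *\<^sub>R a) = \<bar>t\<bar> * qdnorm Q a"
  unfolding qdnorm_eq_qnorm_matrix_inv by (rule qnorm_scaleR)

lemma power2_qnorm_diff:
  assumes "spd Q"
  shows "(qnorm Q (a - b))\<^sup>2 = (qnorm Q a)\<^sup>2 - 2 * (a \<bullet> (Q *v b)) + (qnorm Q b)\<^sup>2"
  using spd_inner_commute[OF assms, of a b]
  by (simp add: assms power2_qnorm matrix_vector_mult_diff_distrib inner_diff_left inner_diff_right)

lemma inner_le_qdnorm_qnorm:
  assumes Q: "spd Q"
  shows "a \<bullet> d \<le> ((qdnorm Q a)\<^sup>2 + (qnorm Q d)\<^sup>2) / 2"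
proof -
  define p where "p = matrix_inv Q *v a"
  have Qp: "Q *v p = a" unfolding p_def by (rule spd_mult_matrix_inv[OF Q])
  have "0 \<le> (qnorm Q (d - p))\<^sup>2" by simp
  also have "\<dots> = (qnorm Q d)\<^sup>2 - 2 * (a \<bullet> d) + p \<bullet> a"
    unfolding power2_qnorm_diff[OF Q] by (simp add: power2_qnorm[OF Q] Qp inner_commute)
  also have "p \<bullet> a = (qdnorm Q a)\<^sup>2"
    by (simp add: qdnorm_eq_qnorm_matrix_inv power2_qnorm[OF spd_matrix_inv[OF Q]] p_def inner_commute)
  finally show ?thesis by simp
qed

lemma has_field_derivative_along_line:
  fixes f :: "'a::real_normed_vector \<Rightarrow> real"
  assumes "(f has_derivative f') (at (u + t *\<^sub>R d))"
  shows "((\<lambda>s. f (u + s *\<^sub>R d)) has_field_derivative f' d) (at t)"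
proof -
  have line: "((\<lambda>s. u + s *\<^sub>R d) has_derivative (\<lambda>s. s *\<^sub>R d)) (at t)"
    by (auto intro!: derivative_eq_intros)
  have "linear f'" using assms by (rule has_derivative_linear)
  with has_derivative_compose[OF line assms] show ?thesis
    by (auto intro: has_derivative_imp_has_field_derivative simp: linear_scale mult.commute)
qed

lemma convex_on_gradient_inequality:
  fixes f :: "'a::real_normed_vector \<Rightarrow> real"
  assumes f: "convex_on UNIV f" and f': "(f has_derivative f') (at u)"
  shows "f u + f' (v - u) \<le> f v"
proof -
  define \<phi> where "\<phi> = (\<lambda>s. f (u + s *\<^sub>R (v - u)))"
  have "convex_on UNIV \<phi>"
  proof (rule convex_onI)
    fix t a b :: real assume "0 < t" "t < 1"
    moreover have "u + ((1 - t) *\<^sub>R a + t *\<^sub>R b) *\<^sub>R (v - u)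
        = (1 - t) *\<^sub>R (u + a *\<^sub>R (v - u)) + t *\<^sub>R (u + b *\<^sub>R (v - u))"
      by (simp add: algebra_simps)
    ultimately show "\<phi> ((1 - t) *\<^sub>R a + t *\<^sub>R b) \<le> (1 - t) * \<phi> a + t * \<phi> b"
      unfolding \<phi>_def using convex_onD[OF f] by simp
  qed simp
  moreover have "(\<phi> has_field_derivative f' (v - u)) (at 0)"
    unfolding \<phi>_def by (rule has_field_derivative_along_line) (simp add: f')
  ultimately have "f' (v - u) * (1 - 0) \<le> \<phi> 1 - \<phi> 0"
    by (intro convex_on_imp_above_tangent) auto
  then show ?thesis unfolding \<phi>_def by simp
qed

lemma qnorm_smooth_upper_bound:
  fixes F :: "real^'n \<Rightarrow> real"
  assumes Q: "spd Q" and L: "L > 0"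
    and F: "\<And>u. (F has_derivative (\<lambda>h. G u \<bullet> h)) (at u)"
    and G: "\<And>u v. qdnorm Q (G u - G v) \<le> L * qnorm Q (u - v)"
  shows "F v \<le> F u + G u \<bullet> (v - u) + L / 2 * (qnorm Q (v - u))\<^sup>2"
proof -
  define d where "d = v - u"
  define D where "D = (qnorm Q d)\<^sup>2"
  define \<psi> where "\<psi> = (\<lambda>t. F (u + t *\<^sub>R d) - t * (G u \<bullet> d) - L / 2 * t\<^sup>2 * D)"
  have "\<psi> 1 \<le> \<psi> 0"
  proof (rule DERIV_nonpos_imp_nonincreasing[of 0 1])
    fix t :: real assume t: "0 \<le> t" "t \<le> 1"
    define a where "a = G (u + t *\<^sub>R d) - G u"
    have "((\<lambda>s. F (u + s *\<^sub>R d)) has_field_derivative G (u + t *\<^sub>R d) \<bullet> d) (at t)"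
      by (rule has_field_derivative_along_line[OF F])
    then have "(\<psi> has_field_derivative a \<bullet> d - L * t * D) (at t)"
      unfolding \<psi>_def a_def by (auto intro!: derivative_eq_intros simp: inner_diff_left)
    moreover have "a \<bullet> d \<le> L * t * D"
    proof (cases "t = 0")
      case False
      have "qdnorm Q a \<le> L * t * qnorm Q d"
        using G[of "u + t *\<^sub>R d" u] t by (simp add: a_def qnorm_scaleR)
      then have "(qdnorm Q a)\<^sup>2 \<le> (L * t * qnorm Q d)\<^sup>2"
        by (rule power_mono) (rule qdnorm_nonneg[OF Q])
      then have "(qdnorm Q a)\<^sup>2 \<le> (L * t)\<^sup>2 * D"
        by (simp add: D_def power_mult_distrib)
      moreover have "a \<bullet> ((L * t) *\<^sub>R d) \<le> ((qdnorm Q a)\<^sup>2 + (L * t)\<^sup>2 * D) / 2"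
        using inner_le_qdnorm_qnorm[OF Q, of a "(L * t) *\<^sub>R d"] by (simp add: D_def qnorm_scaleR power_mult_distrib)
      ultimately have "(L * t) * (a \<bullet> d) \<le> (L * t) * (L * t * D)"
        by (simp add: power2_eq_square)
      with False t L show ?thesis by simp
    qed (simp add: a_def)
    ultimately show "\<exists>y. (\<psi> has_field_derivative y) (at t) \<and> y \<le> 0" by auto
  qed simp
  then show ?thesis unfolding \<psi>_def d_def D_def by simp
qed

lemma qnorm_smooth_convex_lower_bound:
  fixes f :: "real^'n \<Rightarrow> real"
  assumes Q: "spd Q" and L: "L > 0" and f: "convex_on UNIV f"
    and f': "\<And>u. (f has_derivative (\<lambda>h. G u \<bullet> h)) (at u)"
    and G: "\<And>u v. qdnorm Q (G u - G v) \<le> L * qnorm Q (u - v)"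
  shows "f u + G u \<bullet> (v - u) + 1 / (2 * L) * (qdnorm Q (G v - G u))\<^sup>2 \<le> f v"
proof -
  define \<phi> where "\<phi> = (\<lambda>y. f y - G u \<bullet> y)"
  define H where "H = (\<lambda>y. G y - G u)"
  define p where "p = matrix_inv Q *v H v"
  have \<phi>': "(\<phi> has_derivative (\<lambda>h. H y \<bullet> h)) (at y)" for y
    unfolding \<phi>_def H_def using f'[of y]
    by (auto intro!: derivative_eq_intros simp: inner_diff_left)
  have H: "qdnorm Q (H a - H b) \<le> L * qnorm Q (a - b)" for a b
    unfolding H_def using G by simp
  have "concave_on UNIV (\<lambda>y. G u \<bullet> y)"
    unfolding concave_on_def by (rule convex_onI) (simp_all add: inner_add_right)
  then have "convex_on UNIV \<phi>"
    unfolding \<phi>_def by (rule convex_on_diff[OF f])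
  then have "\<phi> u \<le> \<phi> (v - (1 / L) *\<^sub>R p)"
    using convex_on_gradient_inequality[OF _ \<phi>', of u] by (simp add: H_def)
  also have "\<dots> \<le> \<phi> v + H v \<bullet> (- (1 / L) *\<^sub>R p) + L / 2 * (qnorm Q (- (1 / L) *\<^sub>R p))\<^sup>2"
    using qnorm_smooth_upper_bound[OF Q L \<phi>' H, of "v - (1 / L) *\<^sub>R p" v] by simp
  also have "\<dots> = \<phi> v - 1 / (2 * L) * (qdnorm Q (H v))\<^sup>2"
  proof -
    have "H v \<bullet> p = (qdnorm Q (H v))\<^sup>2"
      by (simp add: p_def qdnorm_eq_qnorm_matrix_inv power2_qnorm[OF spd_matrix_inv[OF Q]])
    moreover have "(qnorm Q p)\<^sup>2 = (qdnorm Q (H v))\<^sup>2"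
      by (simp add: p_def power2_qnorm[OF Q] spd_mult_matrix_inv[OF Q] inner_commute
          qdnorm_eq_qnorm_matrix_inv power2_qnorm[OF spd_matrix_inv[OF Q]])
    ultimately show ?thesis
      using L by (simp add: qnorm_uminus qnorm_scaleR power_mult_distrib power2_eq_square field_simps)
  qed
  finally show ?thesis unfolding \<phi>_def H_def by (simp add: inner_diff_right)
qed

lemma gradient_step_bound:
  fixes f :: "real^'n \<Rightarrow> real"
  assumes Q: "spd Q" and L: "L > 0" and f: "convex_on UNIV f"
    and f': "\<And>u. (f has_derivative (\<lambda>h. G u \<bullet> h)) (at u)"
    and G: "\<And>u v. qdnorm Q (G u - G v) \<le> L * qnorm Q (u - v)"
  shows "f x + G x \<bullet> (x' - (1 / L) *\<^sub>R (matrix_inv Q *v G x') - x) + 1 / (2 * L) * (qdnorm Q (G x))\<^sup>2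
    \<le> f x' - 1 / (2 * L) * (qdnorm Q (G x'))\<^sup>2"
proof -
  define m where "m = G x \<bullet> (matrix_inv Q *v G x')"
  have "(qdnorm Q (G x' - G x))\<^sup>2 = (qdnorm Q (G x'))\<^sup>2 - 2 * m + (qdnorm Q (G x))\<^sup>2"
    unfolding qdnorm_eq_qnorm_matrix_inv power2_qnorm_diff[OF spd_matrix_inv[OF Q]] m_def
    using spd_inner_commute[OF spd_matrix_inv[OF Q]] by simp
  then have "1 / (2 * L) * (qdnorm Q (G x' - G x))\<^sup>2
      = 1 / (2 * L) * (qdnorm Q (G x'))\<^sup>2 - 1 / L * m + 1 / (2 * L) * (qdnorm Q (G x))\<^sup>2"
    using L by (simp add: field_simps)
  moreover have "G x \<bullet> (x' - (1 / L) *\<^sub>R (matrix_inv Q *v G x') - x) = G x \<bullet> (x' - x) - 1 / L * m"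
    by (simp add: m_def inner_diff_right)
  ultimately show ?thesis
    using qnorm_smooth_convex_lower_bound[OF Q L f f' G, of x x'] by linarith
qed

lemma gradient_zero_at_minimum:
  fixes f :: "'a::real_inner \<Rightarrow> real"
  assumes "(f has_derivative (\<lambda>h. g \<bullet> h)) (at x)" and "\<And>y. f x \<le> f y"
  shows "g = 0"
proof -
  have "(\<lambda>h. g \<bullet> h) = (\<lambda>h. 0)"
    by (rule differential_zero_maxmin[of x UNIV f]) (use assms in auto)
  then have "g \<bullet> g = 0" by metis
  then show ?thesis by simp
qed

lemma bregman_three_point:
  "bregman w gw z u - bregman w gw z' u - bregman w gw z z' = (gw z' - gw z) \<bullet> (u - z')"
  unfolding bregman_def by (simp add: algebra_simps inner_diff_left inner_diff_right)

lemma mirror_step_gradient: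
  assumes w': "\<And>u. (w has_derivative (\<lambda>h. gw u \<bullet> h)) (at u)"
    and z': "\<And>u. bregman w gw z z' + c \<bullet> (z' - x) \<le> bregman w gw z u + c \<bullet> (u - x)"
  shows "gw z' = gw z - c"
proof -
  have "((\<lambda>u. bregman w gw z u + c \<bullet> (u - x)) has_derivative (\<lambda>h. (gw z' - gw z + c) \<bullet> h)) (at z')"
    unfolding bregman_def using w'[of z']
    by (auto intro!: derivative_eq_intros simp: inner_diff_left inner_add_left)
  from gradient_zero_at_minimum[OF this z'] show ?thesis
    by (simp add: algebra_simps)
qed

lemma mirror_step_bound:
  assumes Q: "spd Q"
    and w': "\<And>u. (w has_derivative (\<lambda>h. gw u \<bullet> h)) (at u)"
    and w_sc: "\<And>u v. w v \<ge> w u + gw u \<bullet> (v - u) + (1/2) * (qnorm Q (v - u))\<^sup>2"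
    and z': "\<And>u. bregman w gw z z' + c \<bullet> (z' - x) \<le> bregman w gw z u + c \<bullet> (u - x)"
  shows "c \<bullet> (z - u) \<le> (qdnorm Q c)\<^sup>2 / 2 + bregman w gw z u - bregman w gw z' u"
proof -
  have "c \<bullet> (z' - u) = bregman w gw z u - bregman w gw z' u - bregman w gw z z'"
    unfolding bregman_three_point mirror_step_gradient[OF w' z'] by (simp add: inner_diff_right)
  moreover have "(qnorm Q (z' - z))\<^sup>2 / 2 \<le> bregman w gw z z'"
    using w_sc[of z z'] unfolding bregman_def by simp
  moreover have "c \<bullet> (z - z') \<le> ((qdnorm Q c)\<^sup>2 + (qnorm Q (z' - z))\<^sup>2) / 2"
    using inner_le_qdnorm_qnorm[OF Q, of c "z - z'"] qnorm_uminus[of Q "z' - z"] by simp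
  ultimately show ?thesis by (simp add: inner_diff_right)
qed

lemma linear_coupling_identity:
  fixes a L :: real
  assumes "a * L \<noteq> 0"
    and "x = (1 - 2 / (a * L)) *\<^sub>R y + (2 / (a * L)) *\<^sub>R z"
  shows "a * (g \<bullet> (x - z)) = (a\<^sup>2 * L - 2 * a) / 2 * (g \<bullet> (y - x))"
proof -
  define t where "t = 2 / (a * L)"
  have "x - z = (1 - t) *\<^sub>R (y - z)" and "y - x = t *\<^sub>R (y - z)"
    using assms(2) unfolding t_def by (simp_all add: algebra_simps)
  moreover have "a * (1 - t) = (a\<^sup>2 * L - 2 * a) / 2 * t"
    using assms(1) unfolding t_def by (simp add: field_simps power2_eq_square)
  ultimately show ?thesis by (metis inner_scaleR_right mult.assoc)
qed

lemma linear_coupling_step: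
  fixes f :: "real^'n \<Rightarrow> real"
  assumes Q: "spd Q" and L: "L > 0" and f: "convex_on UNIV f"
    and f': "\<And>u. (f has_derivative (\<lambda>h. G u \<bullet> h)) (at u)"
    and G: "\<And>u v. qdnorm Q (G u - G v) \<le> L * qnorm Q (u - v)"
    and aL: "2 \<le> a * L"
    and y': "y' = x' - (1 / L) *\<^sub>R (matrix_inv Q *v G x')"
    and x: "x = (1 - 2 / (a * L)) *\<^sub>R y' + (2 / (a * L)) *\<^sub>R z"
  shows "a * (G x \<bullet> (x - z)) \<le> (a\<^sup>2 * L - 2 * a) / 2 *
    (f x' - 1 / (2 * L) * (qdnorm Q (G x'))\<^sup>2 - f x - 1 / (2 * L) * (qdnorm Q (G x))\<^sup>2)"
proof -
  have "a * (G x \<bullet> (x - z)) = (a\<^sup>2 * L - 2 * a) / 2 * (G x \<bullet> (y' - x))"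
    using aL x by (intro linear_coupling_identity) auto
  also have "\<dots> \<le> (a\<^sup>2 * L - 2 * a) / 2 *
      (f x' - 1 / (2 * L) * (qdnorm Q (G x'))\<^sup>2 - f x - 1 / (2 * L) * (qdnorm Q (G x))\<^sup>2)"
  proof (rule mult_left_mono)
    have "0 < a * L" using aL by linarith
    with L have "0 < a" by (simp add: zero_less_mult_iff)
    then show "0 \<le> (a\<^sup>2 * L - 2 * a) / 2"
      using mult_nonneg_nonneg[of a "a * L - 2"] aL by (simp add: power2_eq_square algebra_simps)
  qed (use gradient_step_bound[OF Q L f f' G, of x x'] y' in simp)
  finally show ?thesis .
qed

theorem lemma2:
  fixes Q :: "real^'n^'n"
    and f :: "real^'n \<Rightarrow> real" and gf :: "real^'n \<Rightarrow> real^'n"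
    and w :: "real^'n \<Rightarrow> real" and gw :: "real^'n \<Rightarrow> real^'n"
    and L :: real and xs :: "real^'n"
    and \<alpha> \<tau> :: "nat \<Rightarrow> real"
    and x y z :: "nat \<Rightarrow> real^'n"
    and k :: nat
  assumes Q: "spd Q"
    and f_convex: "convex_on UNIV f"
    and f_grad: "\<And>u. (f has_derivative (\<lambda>h. gf u \<bullet> h)) (at u)"
    and f_lip: "\<And>u v. qdnorm Q (gf u - gf v) \<le> L * qnorm Q (u - v)"
    and xs_min: "\<And>u. f xs \<le> f u"
    and w_grad: "\<And>u. (w has_derivative (\<lambda>h. gw u \<bullet> h)) (at u)"
    and w_sc: "\<And>u v. w v \<ge> w u + gw u \<bullet> (v - u) + (1/2) * (qnorm Q (v - u))\<^sup>2"
    and \<alpha>_pos: "\<And>j. j \<ge> 1 \<Longrightarrow> \<alpha> j > 0"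
    and \<alpha>1: "\<alpha> 1 = 2 / L"
    and \<tau>_def: "\<And>j. \<tau> j = 2 / (\<alpha> (j + 1) * L)"
    and \<tau>_bnd: "\<And>j. 0 < \<tau> j \<and> \<tau> j \<le> 1"
    and z0: "z 0 = x 0"
    and y_step: "\<And>j. y (j + 1) = x j - (1 / L) *\<^sub>R (matrix_inv Q *v gf (x j))"
    and z_step: "\<And>j u. bregman w gw (z j) (z (j + 1)) + (\<alpha> (j + 1) *\<^sub>R gf (x j)) \<bullet> (z (j + 1) - x j)
                     \<le> bregman w gw (z j) u + (\<alpha> (j + 1) *\<^sub>R gf (x j)) \<bullet> (u - x j)"
    and x_step: "\<And>j. x (j + 1) = (1 - \<tau> (j + 1)) *\<^sub>R y (j + 1) + \<tau> (j + 1) *\<^sub>R z (j + 1)"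
  shows "(let h = (\<lambda>u. f u - f xs - 1 / (2 * L) * (qdnorm Q (gf u))\<^sup>2);
              xprev = (if k = 0 then x 0 else x (k - 1))
          in (\<alpha> (k + 1))\<^sup>2 * L / 2 * h (x k) + bregman w gw (z (k + 1)) xs
             \<le> ((\<alpha> (k + 1))\<^sup>2 * L - 2 * \<alpha> (k + 1)) / 2 * h xprev + bregman w gw (z k) xs)"
proof -
  have L: "L > 0" using \<alpha>_pos[of 1] \<alpha>1 by (simp add: zero_less_divide_iff)
  define a where "a = \<alpha> (k + 1)"
  define c where "c = (a\<^sup>2 * L - 2 * a) / 2"
  define g where "g = gf (x k)"
  define N where "N = (qdnorm Q g)\<^sup>2"
  define h where "h = (\<lambda>u. f u - f xs - 1 / (2 * L) * (qdnorm Q (gf u))\<^sup>2)"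
  define xp where "xp = (if k = 0 then x 0 else x (k - 1))"
  have a: "a > 0" using \<alpha>_pos a_def by simp
  have "2 / (a * L) \<le> 1" using \<tau>_bnd[of k] \<tau>_def[of k] a_def by simp
  then have aL: "2 \<le> a * L" using a L by (simp add: field_simps)
  have "gf xs = 0" by (rule gradient_zero_at_minimum[OF f_grad xs_min])
  then have gap: "h (x k) \<le> g \<bullet> (x k - xs) - N / L"
    using qnorm_smooth_convex_lower_bound[OF Q L f_convex f_grad f_lip, of "x k" xs]
    unfolding h_def g_def N_def by (simp add: qdnorm_eq_qnorm_matrix_inv qnorm_uminus inner_diff_right)
  have mirror: "a * (g \<bullet> (z k - xs)) \<le> a\<^sup>2 / 2 * N + bregman w gw (z k) xs - bregman w gw (z (k + 1)) xs"
    using mirror_step_bound[OF Q w_grad w_sc z_step[of k], of xs]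
    unfolding a_def g_def N_def by (simp add: qdnorm_scaleR power_mult_distrib)
  have coupling: "a * (g \<bullet> (x k - z k)) \<le> c * (h xp - h (x k) - N / L)"
  proof (cases k)
    case 0
    then show ?thesis using z0 \<alpha>1 L by (simp add: a_def c_def power2_eq_square)
  next
    case (Suc m)
    have "x k = (1 - 2 / (a * L)) *\<^sub>R y k + (2 / (a * L)) *\<^sub>R z k"
      using x_step[of m] \<tau>_def[of k] Suc by (simp add: a_def)
    moreover have "h xp - h (x k) - N / L
        = f (x m) - 1 / (2 * L) * (qdnorm Q (gf (x m)))\<^sup>2 - f (x k) - 1 / (2 * L) * N"
      using Suc unfolding h_def xp_def N_def g_def by (simp add: field_simps)
    ultimately show ?thesis
      using linear_coupling_step[OF Q L f_convex f_grad f_lip aL y_step[of m]] Suc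
      unfolding c_def g_def N_def by simp
  qed
  have "a * h (x k) \<le> a * (g \<bullet> (x k - z k)) + a * (g \<bullet> (z k - xs)) - a * (N / L)"
    using mult_left_mono[OF gap, of a] a by (simp add: inner_diff_right algebra_simps)
  moreover have "c * (N / L) = a\<^sup>2 / 2 * N - a * (N / L)"
    using L unfolding c_def by (simp add: field_simps power2_eq_square)
  moreover have "c * (h xp - h (x k) - N / L) = c * h xp - c * h (x k) - c * (N / L)"
    by (simp add: right_diff_distrib)
  ultimately have "(c + a) * h (x k) + bregman w gw (z (k + 1)) xs \<le> c * h xp + bregman w gw (z k) xs"
    using mirror coupling unfolding distrib_right inner_diff_right by linarith
  moreover have "(\<alpha> (k + 1))\<^sup>2 * L / 2 = c + a" unfolding c_def a_def by (simp add: field_simps)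
  moreover have "((\<alpha> (k + 1))\<^sup>2 * L - 2 * \<alpha> (k + 1)) / 2 = c" unfolding c_def a_def ..
  ultimately show ?thesis unfolding Let_def h_def xp_def by (simp only:)
qed

end
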